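(* For every $(\overline{u}_{T,k+1/2})_{k=1}^4\in\mathbb{R}^4$, the matrix $\boldsymbol{A}$ is a nonsingular M-matrix (in particular strictly diagonally dominant, with $\boldsymbol{A}^{-1}$ entrywise nonnegative), and the matrix $\boldsymbol{C}:=\boldsymbol{A}^{-1}\boldsymbol{B}$ is entrywise nonnegative and satisfies $\sum_{j=1}^4 c_{ij}=1$ for every $i\in\{1,\dots,4\}$.
   Context: Indices in $\{1,2,3,4\}$ are taken cyclically mod 4. Limiter: $\varphi(r)=\dfrac{r^4+r^3+r^2+r}{r^4+r^3+r^2+r+1}$ for $r\ge0$. Given total velocities $\overline{u}_{T,k+1/2}\in\mathbb{R}$, $k=1,\dots,4$, define $\overline{\omega}^V_{k+1/2}=\varphi(\max(0,\overline{u}_{T,k-1/2}/\overline{u}_{T,k+1/2}))$ if $\overline{u}_{T,k+1/2}>0$, $=\varphi(\max(0,\overline{u}_{T,k+3/2}/\overline{u}_{T,k+1/2}))$ if $\overline{u}_{T,k+1/2}<0$, and $=0$ if $\overline{u}_{T,k+1/2}=0$. The $4\times4$ matrix $\boldsymbol{A}=(a_{ij})$ has $a_{kk}=1$, $a_{k,k-1}=-\overline{\omega}^V_{k+1/2}$ if $\overline{u}_{T,k+1/2}\ge0$ (else $0$), $a_{k,k+1}=-\overline{\omega}^V_{k+1/2}$ if $\overline{u}_{T,k+1/2}<0$ (else $0$), and all other entries $0$. The $4\times4$ matrix $\boldsymbol{B}=(b_{ij})$ has $b_{kk}=1-\overline{\omega}^V_{k+1/2}$ if $\overline{u}_{T,k+1/2}\ge0$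 (else $0$), $b_{k,k+1}=1-\overline{\omega}^V_{k+1/2}$ if $\overline{u}_{T,k+1/2}<0$ (else $0$), and all other entries $0$. *)

theory Defs
  imports "HOL-Analysis.Analysis"
begin

text \<open>Indices 1..4 taken cyclically mod 4 are represented by the finite ring type 4
  (elements 0,1,2,3 = residues mod 4; paper index 4 corresponds to 0).
  The vector u :: real^4 has u$k = u_{T,k+1/2}; so u_{T,k-1/2} = u$(k-1)
  and u_{T,k+3/2} = u$(k+1), with cyclic arithmetic in type 4.\<close>

definition phi :: "real \<Rightarrow> real" where
  "phi r = (r^4 + r^3 + r^2 + r) / (r^4 + r^3 + r^2 + r + 1)"

definition omegaV :: "real^4 \<Rightarrow> 4 \<Rightarrow> real" where
  "omegaV u k =
     (if u$k > 0 then phi (max 0 (u$(k-1) / u$k))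
      else if u$k < 0 then phi (max 0 (u$(k+1) / u$k))
      else 0)"

definition matA :: "real^4 \<Rightarrow> real^4^4" where
  "matA u = (\<chi> k j. if j = k then 1
                     else if u$k \<ge> 0 \<and> j = k - 1 then - omegaV u k
                     else if u$k < 0 \<and> j = k + 1 then - omegaV u k
                     else 0)"

definition matB :: "real^4 \<Rightarrow> real^4^4" where
  "matB u = (\<chi> k j. if u$k \<ge> 0 then (if j = k then 1 - omegaV u k else 0)
                     else (if j = k + 1 then 1 - omegaV u k else 0))"

text \<open>Nonsingular M-matrix: a Z-matrix (nonpositive off-diagonal entries) which is
  invertible with entrywise nonnegative inverse (a standard equivalent definition,
  Berman--Plemmons).\<close>
definition nonsingular_M_matrix :: "real^'n^'n \<Rightarrow> bool" where
  "nonsingular_M_matrix M \<longleftrightarrow>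
     (\<forall>i j. i \<noteq> j \<longrightarrow> M$i$j \<le> 0) \<and> invertible M \<and> (\<forall>i j. matrix_inv M $i$j \<ge> 0)"

definition strictly_diag_dominant :: "real^'n^'n \<Rightarrow> bool" where
  "strictly_diag_dominant M \<longleftrightarrow>
     (\<forall>i. (\<Sum>j\<in>UNIV - {i}. \<bar>M$i$j\<bar>) < \<bar>M$i$i\<bar>)"

end

theory Submission
  imports Defs
begin

text \<open>Every row of \<open>A\<close> has diagonal entry 1 and a single off-diagonal entry
  \<open>-\<omega>\<close> with \<open>0 \<le> \<omega> < 1\<close>, so \<open>A\<close> is a strictly diagonally dominant Z-matrix with
  positive diagonal. Such a matrix satisfies a discrete minimum principle: if \<open>M x \<ge> 0\<close>
  then \<open>x \<ge> 0\<close>, since at a negative minimum of \<open>x\<close> the row of \<open>M x\<close> is at most the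
  minimum times the (positive) row sum. Hence \<open>M\<close> is invertible with nonnegative
  inverse. Moreover every row of \<open>B\<close> has the same sum \<open>1 - \<omega>\<close> as the corresponding
  row of \<open>A\<close>, i.e. \<open>B 1 = A 1\<close>, so \<open>A\<^sup>-\<^sup>1 B 1 = 1\<close>.\<close>

lemma matrix_inv_mult:
  fixes M :: "'a::semiring_1^'n^'n"
  assumes "invertible M"
  shows "M ** matrix_inv M = mat 1" and "matrix_inv M ** M = mat 1"
  using someI_ex[OF assms[unfolded invertible_def]] unfolding matrix_inv_def by auto

context
  fixes M :: "real^'n^'n"
  assumes sdd: "strictly_diag_dominant M"
    and offdiag: "\<And>i j. i \<noteq> j \<Longrightarrow> M $ i $ j \<le> 0"
    and diag: "\<And>i. M $ i $ i > 0"
begin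

lemma row_sum_pos_if_strictly_diag_dominant: "(\<Sum>j\<in>UNIV. M $ k $ j) > 0"
proof -
  have "(\<Sum>j\<in>UNIV - {k}. \<bar>M $ k $ j\<bar>) = (\<Sum>j\<in>UNIV - {k}. - M $ k $ j)"
    using offdiag by (intro sum.cong) (auto simp: abs_of_nonpos)
  then have "- (\<Sum>j\<in>UNIV - {k}. M $ k $ j) < M $ k $ k"
    using sdd diag[of k] unfolding strictly_diag_dominant_def by (metis abs_of_pos sum_negf)
  moreover have "(\<Sum>j\<in>UNIV. M $ k $ j) = M $ k $ k + (\<Sum>j\<in>UNIV - {k}. M $ k $ j)"
    by (simp add: sum.remove)
  ultimately show ?thesis
    by linarith
qed

lemma nonneg_if_strictly_diag_dominant_mult_nonneg:
  assumes Mx: "\<And>k. (M *v x) $ k \<ge> 0"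
  shows "x $ i \<ge> 0"
proof (rule ccontr)
  assume "\<not> x $ i \<ge> 0"
  define m where "m = Min (range (\<lambda>j. x $ j))"
  obtain k where k: "x $ k = m"
    unfolding m_def by (metis (mono_tags) Min_in finite UNIV_not_empty finite_imageI image_is_empty imageE)
  have m_le: "m \<le> x $ j" for j
    unfolding m_def by simp
  with \<open>\<not> x $ i \<ge> 0\<close> have "m < 0"
    by (meson le_less_trans not_le)
  have "(M *v x) $ k = (\<Sum>j\<in>UNIV. M $ k $ j * x $ j)"
    by (simp add: matrix_vector_mult_def)
  also have "\<dots> \<le> (\<Sum>j\<in>UNIV. M $ k $ j * m)"
  proof (rule sum_mono)
    fix j
    show "M $ k $ j * x $ j \<le> M $ k $ j * m"
      using k offdiag[of k j] m_le[of j] by (cases "j = k") (auto intro: mult_left_mono_neg)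
  qed
  also have "\<dots> = m * (\<Sum>j\<in>UNIV. M $ k $ j)"
    by (simp add: sum_distrib_left mult.commute)
  also have "\<dots> < 0"
    using \<open>m < 0\<close> row_sum_pos_if_strictly_diag_dominant by (simp add: mult_neg_pos)
  finally show False
    using Mx[of k] by simp
qed

lemma invertible_if_strictly_diag_dominant: "invertible M"
proof -
  have "x = 0" if Mx: "M *v x = 0" for x
  proof -
    have "M *v (- x) = 0"
      using Mx matrix_vector_mult_diff_distrib[of M 0 x] by simp
    have "(- x) $ i \<ge> 0" for i
      by (rule nonneg_if_strictly_diag_dominant_mult_nonneg) (simp add: \<open>M *v (- x) = 0\<close>)
    moreover have "x $ i \<ge> 0" for i
      by (rule nonneg_if_strictly_diag_dominant_mult_nonneg) (simp add: Mx)
    ultimately show "x = 0"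
      by (simp add: vec_eq_iff) (meson antisym neg_le_0_iff_le)
  qed
  then show ?thesis
    by (simp add: invertible_left_inverse matrix_left_invertible_ker)
qed

lemma matrix_inv_nonneg_if_strictly_diag_dominant: "matrix_inv M $ i $ j \<ge> 0"
proof -
  let ?x = "matrix_inv M *v axis j 1"
  have Mx: "M *v ?x = axis j 1"
    using invertible_if_strictly_diag_dominant
    by (simp add: matrix_vector_mul_assoc matrix_inv_mult(1))
  have "?x $ i \<ge> 0"
    by (rule nonneg_if_strictly_diag_dominant_mult_nonneg) (unfold Mx, simp add: axis_def)
  moreover have "?x $ i = matrix_inv M $ i $ j"
    by (simp add: matrix_vector_mult_def axis_def if_distrib cong: if_cong)
  ultimately show ?thesis
    by simp
qed

lemma nonsingular_M_matrix_if_strictly_diag_dominant: "nonsingular_M_matrix M"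
  unfolding nonsingular_M_matrix_def
  using offdiag invertible_if_strictly_diag_dominant matrix_inv_nonneg_if_strictly_diag_dominant
  by blast

end

lemma row_sum_eq_mult_ones: "(\<Sum>j\<in>UNIV. M $ i $ j) = (M *v (\<chi> j. 1)) $ i"
  for M :: "'a::comm_semiring_1^'n^'m"
  by (simp add: matrix_vector_mult_def)

lemma row_sums_matrix_inv_mult:
  fixes M :: "'a::comm_semiring_1^'n^'n" and N :: "'a^'m^'n"
  assumes "invertible M"
    and "\<And>i. (\<Sum>j\<in>UNIV. N $ i $ j) = (\<Sum>j\<in>UNIV. M $ i $ j)"
  shows "(\<Sum>j\<in>UNIV. (matrix_inv M ** N) $ i $ j) = 1"
proof -
  have "N *v (\<chi> j. 1) = M *v (\<chi> j. 1)"
    using assms(2) by (simp add: vec_eq_iff row_sum_eq_mult_ones[symmetric])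
  then have "(matrix_inv M ** N) *v (\<chi> j. 1) = (matrix_inv M ** M) *v (\<chi> j. 1)"
    by (simp only: matrix_vector_mul_assoc[symmetric])
  then show ?thesis
    by (simp add: row_sum_eq_mult_ones matrix_inv_mult(2)[OF assms(1)])
qed

lemma matrix_mult_nonneg:
  fixes M :: "'a::linordered_semidom^'n^'m" and N :: "'a^'p^'n"
  assumes "\<And>i j. M $ i $ j \<ge> 0" and "\<And>i j. N $ i $ j \<ge> 0"
  shows "(M ** N) $ i $ j \<ge> 0"
  using assms by (simp add: matrix_matrix_mult_def sum_nonneg)

lemma phi_nonneg_less_one:
  assumes "0 \<le> r"
  shows "0 \<le> phi r \<and> phi r < 1"
proof -
  have "0 \<le> r^4 + r^3 + r^2 + r"
    using assms by simp
  then show ?thesis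
    unfolding phi_def by (auto simp: divide_simps)
qed

lemma omegaV_nonneg_less_one: "0 \<le> omegaV u k \<and> omegaV u k < 1"
  unfolding omegaV_def using phi_nonneg_less_one by auto

definition upwind_neighbour :: "real^4 \<Rightarrow> 4 \<Rightarrow> 4" where
  "upwind_neighbour u k = (if u $ k \<ge> 0 then k - 1 else k + 1)"

lemma upwind_neighbour_neq: "upwind_neighbour u k \<noteq> k"
  unfolding upwind_neighbour_def by (cases k) auto

lemma matA_entry:
  "matA u $ k $ j = (if j = k then 1 else if j = upwind_neighbour u k then - omegaV u k else 0)"
  unfolding matA_def upwind_neighbour_def by auto

lemma matA_offdiag_nonpos: "k \<noteq> j \<Longrightarrow> matA u $ k $ j \<le> 0"
  using omegaV_nonneg_less_one[of u k] by (simp add: matA_entry)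

lemma matA_diag_pos: "matA u $ k $ k > 0"
  by (simp add: matA_entry)

lemma matA_strictly_diag_dominant: "strictly_diag_dominant (matA u)"
  unfolding strictly_diag_dominant_def
proof
  fix k
  have "(\<Sum>j\<in>UNIV - {k}. \<bar>matA u $ k $ j\<bar>)
      = (\<Sum>j\<in>UNIV - {k}. if j = upwind_neighbour u k then omegaV u k else 0)"
    using omegaV_nonneg_less_one[of u k] by (intro sum.cong) (auto simp: matA_entry)
  also have "\<dots> = omegaV u k"
    using upwind_neighbour_neq[of u k] by (simp add: sum.delta)
  finally show "(\<Sum>j\<in>UNIV - {k}. \<bar>matA u $ k $ j\<bar>) < \<bar>matA u $ k $ k\<bar>"
    using omegaV_nonneg_less_one[of u k] by (simp add: matA_entry)
qed

lemma matA_row_sum: "(\<Sum>j\<in>UNIV. matA u $ k $ j) = 1 - omegaV u k"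
proof -
  have "(\<Sum>j\<in>UNIV. matA u $ k $ j)
      = (\<Sum>j\<in>UNIV. (if j = k then 1 else 0) + (if j = upwind_neighbour u k then - omegaV u k else 0))"
    using upwind_neighbour_neq[of u k] by (intro sum.cong) (simp_all add: matA_entry)
  then show ?thesis
    by (simp add: sum.distrib)
qed

lemma matB_row_sum: "(\<Sum>j\<in>UNIV. matB u $ k $ j) = 1 - omegaV u k"
proof -
  have "matB u $ k = (\<chi> j. if j = (if u $ k \<ge> 0 then k else k + 1) then 1 - omegaV u k else 0)"
    unfolding matB_def by (simp add: vec_eq_iff)
  then show ?thesis
    by simp
qed

lemma matB_nonneg: "matB u $ i $ j \<ge> 0"
  unfolding matB_def using omegaV_nonneg_less_one[of u i] by auto

theorem mainTheorem2:
  fixes u :: "real^4"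
  defines "C \<equiv> matrix_inv (matA u) ** matB u"
  shows "nonsingular_M_matrix (matA u) \<and> strictly_diag_dominant (matA u)
         \<and> (\<forall>i j. matrix_inv (matA u) $ i $ j \<ge> 0)
         \<and> (\<forall>i j. C $ i $ j \<ge> 0)
         \<and> (\<forall>i. (\<Sum>j\<in>UNIV. C $ i $ j) = 1)"
proof -
  have M: "nonsingular_M_matrix (matA u)"
    using matA_strictly_diag_dominant matA_offdiag_nonpos matA_diag_pos
    by (rule nonsingular_M_matrix_if_strictly_diag_dominant)
  then have inv: "invertible (matA u)" and inv_nonneg: "\<forall>i j. matrix_inv (matA u) $ i $ j \<ge> 0"
    unfolding nonsingular_M_matrix_def by blast+
  have C_nonneg: "C $ i $ j \<ge> 0" for i j
    unfolding C_def using inv_nonneg matB_nonneg by (intro matrix_mult_nonneg) blast+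
  have C_row_sum: "(\<Sum>j\<in>UNIV. C $ i $ j) = 1" for i
    unfolding C_def by (rule row_sums_matrix_inv_mult[OF inv]) (simp only: matA_row_sum matB_row_sum)
  show ?thesis
    using M matA_strictly_diag_dominant inv_nonneg C_nonneg C_row_sum by (intro conjI allI) simp_all
qed

end
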